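(* Let $P\subset\mathbb{R}^d$ be a finite point set whose minimum pairwise distance is $1$, and let $G$ be the final graph of the uncoordinated construction (described in the context) on $P$ with parameter $s>1$. Then for any two points $p,q\in P$ there is a path in $G$ between $p$ and $q$ of Euclidean length at most $\frac{s+1}{s-1}|pq|$ using at most $2|pq|^{1/(1+\lg s)}$ edges.
   Context: Fix $d\ge 1$; $|xy|$ is Euclidean distance; $\lg$ is logarithm base 2. Uncoordinated construction: start with the graph $G$ on vertex set $P$ with no edges. Every ordered pair $(p,q)$ of distinct points of $P$ is processed exactly once, in an arbitrary order, one at a time. When $(p,q)$ is processed, the edge $pq$ is added to $G$ unless $G$ currently contains an edge whose endpoints can be labeled $p',q'$ with $|pp'|\le |p'q'|/(2s+2)$ and $|qq'|\le |p'q'|/(2s+2)$. $G$ is the graph after all pairs are processed. *)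

theory Defs
  imports "HOL-Analysis.Analysis"
begin

text \<open>Graphs are represented by their edge sets: sets of unordered pairs (doubletons).\<close>

definition lg :: "real \<Rightarrow> real" where
  "lg x = log 2 x"

definition covered :: "real \<Rightarrow> ('a::metric_space) set set \<Rightarrow> 'a \<Rightarrow> 'a \<Rightarrow> bool" where
  "covered s E p q \<longleftrightarrow> (\<exists>p' q'. {p', q'} \<in> E \<and>
      dist p p' \<le> dist p' q' / (2 * s + 2) \<and> dist q q' \<le> dist p' q' / (2 * s + 2))"

definition uc_step :: "real \<Rightarrow> ('a::metric_space) set set \<Rightarrow> 'a \<times> 'a \<Rightarrow> 'a set set" where
  "uc_step s E pq = (if covered s E (fst pq) (snd pq) then E else insert {fst pq, snd pq} E)"

definition uc_graph :: "real \<Rightarrow> ('a::metric_space \<times> 'a) list \<Rightarrow> 'a set set" where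
  "uc_graph s pairs = foldl (uc_step s) {} pairs"

definition valid_order :: "'a set \<Rightarrow> ('a \<times> 'a) list \<Rightarrow> bool" where
  "valid_order P pairs \<longleftrightarrow> distinct pairs \<and> set pairs = {(p, q). p \<in> P \<and> q \<in> P \<and> p \<noteq> q}"

definition is_path :: "'a set set \<Rightarrow> 'a list \<Rightarrow> 'a \<Rightarrow> 'a \<Rightarrow> bool" where
  "is_path E xs p q \<longleftrightarrow> xs \<noteq> [] \<and> hd xs = p \<and> last xs = q \<and>
     (\<forall>i. Suc i < length xs \<longrightarrow> {xs ! i, xs ! Suc i} \<in> E)"

definition path_len :: "('a::metric_space) list \<Rightarrow> real" where
  "path_len xs = (\<Sum>i<length xs - 1. dist (xs ! i) (xs ! Suc i))"

definition num_edges :: "'a list \<Rightarrow> nat" where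
  "num_edges xs = length xs - 1"

end

theory Submission imports Defs begin

text \<open>By strong induction on dist p q, which is possible because P is finite.  The final graph
  covers every pair (p, q) by an edge p'q' with p' and q' within dist p q / (2s) of p and q, so
  concatenating the inductively given paths from p to p' and from q' to q with the edge p'q'
  gives the stretch (s+1)/(s-1).  For the hop count, with \<alpha> = 1/(1 + lg s) one has
  (D/(2s)) powr \<alpha> = D powr \<alpha> / 2, so the bounds 2 d powr \<alpha> - 1 of the two subpaths add up,
  together with the middle edge, to at most 2 D powr \<alpha> - 1; this needs D \<ge> 1.\<close>

lemma uc_step_mono: "E \<subseteq> uc_step s E pq"
  unfolding uc_step_def by auto

lemma uc_step_subset: "uc_step s E (a, b) \<subseteq> insert {a, b} E"
  unfolding uc_step_def by auto

lemma covered_mono: "covered s E a b \<Longrightarrow> E \<subseteq> F \<Longrightarrow> covered s F a b"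
  unfolding covered_def by blast

lemma covered_uc_step:
  assumes "s > -1"
  shows "covered s (uc_step s E (a, b)) a b"
proof (cases "covered s E a b")
  case True
  then show ?thesis by (simp add: uc_step_def)
next
  case False
  have "covered s (insert {a, b} E) a b"
    unfolding covered_def using assms by (intro exI[of _ a] exI[of _ b]) simp
  then show ?thesis using False by (simp add: uc_step_def)
qed

lemma foldl_uc_step_mono: "E \<subseteq> foldl (uc_step s) E xs"
proof (induction xs arbitrary: E)
  case (Cons x xs)
  show ?case using Cons.IH[of "uc_step s E x"] uc_step_mono[of E s x] by simp
qed simp

lemma foldl_uc_step_covered:
  "s > -1 \<Longrightarrow> (a, b) \<in> set xs \<Longrightarrow> covered s (foldl (uc_step s) E xs) a b"
proof (induction xs arbitrary: E)
  case (Cons x xs)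
  show ?case
  proof (cases "x = (a, b)")
    case True
    then show ?thesis
      using covered_mono[OF covered_uc_step[OF Cons.prems(1)] foldl_uc_step_mono] by simp
  next
    case False
    then show ?thesis using Cons by simp
  qed
qed simp

lemma foldl_uc_step_subset:
  "foldl (uc_step s) E xs \<subseteq> E \<union> {{a, b} | a b. (a, b) \<in> set xs}"
proof (induction xs arbitrary: E)
  case (Cons x xs)
  obtain a b where "x = (a, b)" by fastforce
  then show ?case using Cons.IH[of "uc_step s E x"] uc_step_subset[of s E a b] by auto blast
qed simp

lemma uc_graph_covered:
  assumes "valid_order P pairs" "s > -1" "a \<in> P" "b \<in> P" "a \<noteq> b"
  shows "covered s (uc_graph s pairs) a b"
proof -
  have "(a, b) \<in> set pairs" using assms(1,3-5) by (simp add: valid_order_def)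
  then show ?thesis unfolding uc_graph_def by (rule foldl_uc_step_covered[OF assms(2)])
qed

lemma uc_graph_edge_in:
  assumes "valid_order P pairs" "{a, b} \<in> uc_graph s pairs"
  shows "a \<in> P \<and> b \<in> P"
proof -
  have "{a, b} \<in> {} \<union> {{u, v} | u v. (u, v) \<in> set pairs}"
    using subsetD[OF foldl_uc_step_subset assms(2)[unfolded uc_graph_def]] .
  then obtain u v where "{a, b} = {u, v}" "(u, v) \<in> set pairs" by blast
  then show ?thesis using assms(1) by (auto simp: valid_order_def doubleton_eq_iff)
qed

lemma dist_triangle_edge:
  fixes p q p' q' :: "'a::metric_space"
  shows "dist p' q' \<le> dist p p' + dist p q + dist q q'"
  using dist_triangle[of p' q' p] dist_triangle[of p q' q] by (simp add: dist_commute)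

lemma covered_imp_close_edge:
  fixes p q :: "'a::metric_space"
  assumes "covered s E p q" "s > 1"
  obtains p' q' where "{p', q'} \<in> E"
    "dist p p' \<le> dist p q / (2 * s)" "dist q q' \<le> dist p q / (2 * s)"
proof -
  obtain p' q' where e: "{p', q'} \<in> E"
    and p': "dist p p' \<le> dist p' q' / (2 * s + 2)" and q': "dist q q' \<le> dist p' q' / (2 * s + 2)"
    using assms(1) by (auto simp: covered_def)
  have "dist p' q' \<le> dist p p' + dist p q + dist q q'"
    by (rule dist_triangle_edge)
  also have "\<dots> \<le> 2 * (dist p' q' / (2 * s + 2)) + dist p q"
    using p' q' by linarith
  finally have "dist p' q' * (2 * s) \<le> dist p q * (2 * s + 2)"
    using assms(2) by (simp add: field_simps)
  then have "dist p' q' / (2 * s + 2) \<le> dist p q / (2 * s)"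
    using assms(2) by (simp add: field_simps)
  then show ?thesis
    using that e p' q' by fastforce
qed

lemma path_len_singleton [simp]: "path_len [x] = 0"
  by (simp add: path_len_def)

lemma path_len_Cons_Cons: "path_len (x # y # zs) = dist x y + path_len (y # zs)"
  unfolding path_len_def by (simp add: sum.lessThan_Suc_shift del: sum.lessThan_Suc)

lemma path_len_append:
  "xs \<noteq> [] \<Longrightarrow> ys \<noteq> [] \<Longrightarrow> path_len (xs @ ys) = path_len xs + dist (last xs) (hd ys) + path_len ys"
proof (induction xs rule: induct_list012)
  case (2 x)
  then show ?case by (cases ys) (auto simp: path_len_Cons_Cons)
next
  case (3 x y zs)
  then show ?case by (simp add: path_len_Cons_Cons)
qed simp

lemma num_edges_append:
  "xs \<noteq> [] \<Longrightarrow> ys \<noteq> [] \<Longrightarrow> num_edges (xs @ ys) = num_edges xs + 1 + num_edges ys"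
  by (cases xs; cases ys) (simp_all add: num_edges_def)

lemma is_path_singleton: "is_path E [a] a a"
  by (simp add: is_path_def)

lemma is_path_append:
  assumes "is_path E xs a b" "is_path E ys c d" "{b, c} \<in> E"
  shows "is_path E (xs @ ys) a d"
  unfolding is_path_def
proof (intro conjI allI impI)
  show "xs @ ys \<noteq> []" "hd (xs @ ys) = a" "last (xs @ ys) = d"
    using assms by (simp_all add: is_path_def)
  fix i assume i: "Suc i < length (xs @ ys)"
  consider "Suc i < length xs" | "Suc i = length xs" | "Suc i > length xs" by linarith
  then show "{(xs @ ys) ! i, (xs @ ys) ! Suc i} \<in> E"
  proof cases
    case 1
    then show ?thesis using assms(1) by (simp add: nth_append is_path_def)
  next
    case 2
    then have "xs ! i = last xs" by (metis diff_Suc_1 last_conv_nth list.size(3) nat.distinct(1))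
    moreover have "ys ! 0 = hd ys" using assms(2) by (metis hd_conv_nth is_path_def)
    ultimately show ?thesis using 2 assms by (simp add: nth_append is_path_def)
  next
    case 3
    then obtain j where j: "i = length xs + j" by (metis less_Suc_eq_le le_Suc_ex Suc_leD less_eq_Suc_le)
    then have "Suc j < length ys" using i by simp
    then show ?thesis using assms(2) j by (simp add: nth_append is_path_def)
  qed
qed

text \<open>The hop bound is strengthened by one so that two subpaths and a middle edge fit into it; it
  is waived for p = q, where the one-point path has no edges.\<close>

definition short_path :: "real \<Rightarrow> ('a::metric_space) set set \<Rightarrow> 'a list \<Rightarrow> 'a \<Rightarrow> 'a \<Rightarrow> bool" where
  "short_path s E xs p q \<longleftrightarrow> is_path E xs p q
     \<and> path_len xs \<le> (s + 1) / (s - 1) * dist p q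
     \<and> real (num_edges xs) \<le> (if p = q then 0 else 2 * dist p q powr (1 / (1 + lg s)) - 1)"

lemma short_path_refl: "short_path s E [p] p p"
  by (simp add: short_path_def is_path_singleton num_edges_def)

lemma powr_divide_2s:
  fixes s D :: real
  assumes "s > 1" "D > 0"
  shows "(D / (2 * s)) powr (1 / (1 + lg s)) = D powr (1 / (1 + lg s)) / 2"
proof -
  have "lg s > 0" using assms by (simp add: lg_def)
  moreover have "log 2 (2 * s) = 1 + lg s" using assms by (simp add: lg_def log_mult)
  ultimately have lg: "1 + lg s > 0" "log 2 (2 * s) = 1 + lg s" by simp_all
  have "(2 * s) powr (1 / (1 + lg s)) = (2 powr log 2 (2 * s)) powr (1 / (1 + lg s))"
    using assms by simp
  also have "\<dots> = 2 powr (log 2 (2 * s) * (1 / (1 + lg s)))"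
    by (rule powr_powr)
  also have "\<dots> = 2" using lg by simp
  finally show ?thesis using assms by (simp add: powr_divide)
qed

lemma stretch_join:
  fixes a b c D s L1 L2 :: real
  assumes "s > 1" "L1 \<le> (s + 1) / (s - 1) * a" "L2 \<le> (s + 1) / (s - 1) * b" "c \<le> a + D + b"
    "a \<le> D / (2 * s)" "b \<le> D / (2 * s)"
  shows "L1 + c + L2 \<le> (s + 1) / (s - 1) * D"
proof -
  have ab: "(a + b) * (2 * s) \<le> 2 * D"
    using assms(1,5,6) by (simp add: field_simps)
  have "L1 + c + L2 \<le> (s + 1) / (s - 1) * (a + b) + (a + b) + D"
    using assms(2-4) by (simp add: distrib_left)
  also have "\<dots> = ((a + b) * (2 * s) + D * (s - 1)) / (s - 1)"
    using assms(1) by (simp add: field_simps)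
  also have "\<dots> \<le> (2 * D + D * (s - 1)) / (s - 1)"
    using ab assms(1) by (intro divide_right_mono) auto
  also have "\<dots> = (s + 1) / (s - 1) * D"
    using assms(1) by (simp add: field_simps)
  finally show ?thesis .
qed

lemma short_path_join:
  fixes p q :: "'a::metric_space"
  assumes "s > 1" "dist p q \<ge> 1" "{p', q'} \<in> E"
    and close: "dist p p' \<le> dist p q / (2 * s)" "dist q' q \<le> dist p q / (2 * s)"
    and paths: "short_path s E xs p p'" "short_path s E ys q' q"
  shows "short_path s E (xs @ ys) p q"
proof -
  define D where "D = dist p q"
  define \<alpha> where "\<alpha> = 1 / (1 + lg s)"
  have ends: "xs \<noteq> []" "ys \<noteq> []" "last xs = p'" "hd ys = q'"
    using paths by (auto simp: short_path_def is_path_def)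
  have "is_path E (xs @ ys) p q"
    using is_path_append assms(3) paths by (metis short_path_def)
  moreover have "dist p' q' \<le> dist p p' + D + dist q' q"
    unfolding D_def using dist_triangle_edge[of p' q' p q] by (simp add: dist_commute)
  then have "path_len (xs @ ys) \<le> (s + 1) / (s - 1) * D"
    unfolding path_len_append[OF ends(1,2)] ends(3,4)
    using stretch_join[OF assms(1) _ _ _ close[folded D_def]] paths by (simp add: short_path_def)
  moreover have "real (num_edges (xs @ ys)) \<le> 2 * D powr \<alpha> - 1"
  proof -
    have "lg s > 0" using assms(1) by (simp add: lg_def)
    then have "\<alpha> > 0" by (simp add: \<alpha>_def)
    then have D\<alpha>: "D powr \<alpha> \<ge> 1" using assms(2) by (simp add: D_def ge_one_powr_ge_zero)
    have half: "(D / (2 * s)) powr \<alpha> = D powr \<alpha> / 2"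
      using powr_divide_2s[OF assms(1), of D] assms(2) unfolding D_def \<alpha>_def by force
    have "dist p p' powr \<alpha> \<le> D powr \<alpha> / 2" "dist q' q powr \<alpha> \<le> D powr \<alpha> / 2"
      using close half \<open>\<alpha> > 0\<close> by (metis D_def less_imp_le powr_mono2 zero_le_dist)+
    then show ?thesis
      using paths D\<alpha> num_edges_append[OF ends(1,2)]
      unfolding short_path_def \<alpha>_def by (simp split: if_splits)
  qed
  ultimately show ?thesis
    using assms(2) unfolding short_path_def D_def \<alpha>_def by auto
qed

lemma card_shorter_pairs_less:
  fixes P :: "('a::metric_space) set"
  assumes "finite P" "a \<in> P" "b \<in> P" "dist a b < D"
  shows "card {(u, v) \<in> P \<times> P. dist u v < dist a b} < card {(u, v) \<in> P \<times> P. dist u v < D}"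
proof (rule psubset_card_mono)
  show "finite {(u, v) \<in> P \<times> P. dist u v < D}"
    using assms(1) by (auto intro: finite_subset[of _ "P \<times> P"])
  show "{(u, v) \<in> P \<times> P. dist u v < dist a b} \<subset> {(u, v) \<in> P \<times> P. dist u v < D}"
    using assms by auto
qed

lemma covering_graph_short_paths:
  fixes P :: "('a::metric_space) set"
  assumes "finite P" "s > 1"
    and separated: "\<And>u v. u \<in> P \<Longrightarrow> v \<in> P \<Longrightarrow> u \<noteq> v \<Longrightarrow> dist u v \<ge> 1"
    and covers: "\<And>u v. u \<in> P \<Longrightarrow> v \<in> P \<Longrightarrow> u \<noteq> v \<Longrightarrow> covered s E u v"
    and edges: "\<And>u v. {u, v} \<in> E \<Longrightarrow> u \<in> P"
    and "p \<in> P" "q \<in> P"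
  shows "\<exists>xs. short_path s E xs p q"
  using assms(6,7)
proof (induction "card {(u, v) \<in> P \<times> P. dist u v < dist p q}" arbitrary: p q rule: less_induct)
  case less
  show ?case
  proof (cases "p = q")
    case True
    then show ?thesis using short_path_refl by blast
  next
    case False
    define D where "D = dist p q"
    have D1: "D \<ge> 1" using separated less.prems False by (simp add: D_def)
    obtain p' q' where e: "{p', q'} \<in> E"
      and close: "dist p p' \<le> D / (2 * s)" "dist q q' \<le> D / (2 * s)"
      using covered_imp_close_edge[OF covers[OF less.prems False] assms(2)] unfolding D_def .
    have in_P: "p' \<in> P" "q' \<in> P"
      using edges[of p' q'] edges[of q' p'] e by (simp_all add: insert_commute)
    have shorter: "\<exists>xs. short_path s E xs a b"
      if "a \<in> P" "b \<in> P" "dist a b \<le> D / (2 * s)" for a b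
    proof -
      have "D / (2 * s) < D" using D1 assms(2) by (simp add: field_simps)
      then have "dist a b < dist p q" using that(3) unfolding D_def by linarith
      from less.hyps[OF card_shorter_pairs_less[OF assms(1) that(1,2) this] that(1,2)]
      show ?thesis .
    qed
    have close': "dist q' q \<le> D / (2 * s)" using close(2) by (simp add: dist_commute)
    obtain xs ys where "short_path s E xs p p'" "short_path s E ys q' q"
      using shorter[OF _ _ close(1)] shorter[OF _ _ close'] in_P less.prems by blast
    then have "short_path s E (xs @ ys) p q"
      using short_path_join[OF assms(2) _ e] D1 close(1) close' unfolding D_def by blast
    then show ?thesis ..
  qed
qed

theorem theorem12:
  fixes P :: "(real ^ 'd) set" and s :: real and pairs :: "((real ^ 'd) \<times> (real ^ 'd)) list"
  assumes "finite P"
    and "\<forall>p\<in>P. \<forall>q\<in>P. p \<noteq> q \<longrightarrow> dist p q \<ge> 1"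
    and "\<exists>p\<in>P. \<exists>q\<in>P. p \<noteq> q \<and> dist p q = 1"
    and "s > 1"
    and "valid_order P pairs"
    and "p \<in> P" and "q \<in> P"
  shows "\<exists>xs. is_path (uc_graph s pairs) xs p q
           \<and> path_len xs \<le> (s + 1) / (s - 1) * dist p q
           \<and> real (num_edges xs) \<le> 2 * dist p q powr (1 / (1 + lg s))"
proof -
  have "\<exists>xs. short_path s (uc_graph s pairs) xs p q"
  proof (rule covering_graph_short_paths[OF assms(1,4) _ _ _ assms(6,7)])
    show "\<And>u v. u \<in> P \<Longrightarrow> v \<in> P \<Longrightarrow> u \<noteq> v \<Longrightarrow> 1 \<le> dist u v"
      using assms(2) by blast
    show "\<And>u v. u \<in> P \<Longrightarrow> v \<in> P \<Longrightarrow> u \<noteq> v \<Longrightarrow> covered s (uc_graph s pairs) u v"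
      using uc_graph_covered[OF assms(5)] assms(4) by simp
    show "\<And>u v. {u, v} \<in> uc_graph s pairs \<Longrightarrow> u \<in> P"
      using uc_graph_edge_in[OF assms(5)] by blast
  qed
  then obtain xs where "short_path s (uc_graph s pairs) xs p q" ..
  then show ?thesis
    unfolding short_path_def by (intro exI[of _ xs]) (auto split: if_splits)
qed

end
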